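(* For all nonnegative integers $i_1,\dots,i_n$ and $j_1,\dots,j_n$, $$\big|e_{i_1,\dots,i_n}-e_{j_1,\dots,j_n}\big|\le 6\sqrt{\sum_{\ell=1}^n|i_\ell-j_\ell|}.$$
   Context: Let $(U_{\ell,r})_{\ell,r\ge1}$ be i.i.d. uniform random variables on $[0,1]$. For nonnegative integers $i_1,\dots,i_n$ let $\mathcal S_{i_1,\dots,i_n}=\bigcup_{\ell=1}^n\bigcup_{r=1}^{i_\ell}\{(U_{\ell,r},\ell)\}$ ($i_\ell$ uniform points on the horizontal line at height $\ell$), and $e_{i_1,\dots,i_n}=\mathbb E[\mathcal L_<(\mathcal S_{i_1,\dots,i_n})]$, where for a finite point set $\mathcal P$, $\mathcal L_<(\mathcal P)$ is the maximal length of a chain $P_1\prec\dots\prec P_L$ in $\mathcal P$, with $(a,b)\prec(a',b')$ iff $a<a'$ and $b<b'$. *)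

theory Defs
  imports "HOL-Probability.Probability"
begin

definition prec :: "real \<times> real \<Rightarrow> real \<times> real \<Rightarrow> bool" where
  "prec p q \<longleftrightarrow> fst p < fst q \<and> snd p < snd q"

definition Lchain :: "(real \<times> real) set \<Rightarrow> nat" where
  "Lchain P = Max {length xs | xs. set xs \<subseteq> P \<and> sorted_wrt prec xs}"

text \<open>Underlying probability space: i.i.d. uniform variables U_(l,r) on [0,1], l,r >= 1
  (the coordinate maps of the infinite product measure).\<close>
definition Umeasure :: "(nat \<times> nat \<Rightarrow> real) measure" where
  "Umeasure = PiM UNIV (\<lambda>_. uniform_measure lborel {0..1::real})"

definition Sset :: "nat \<Rightarrow> (nat \<Rightarrow> nat) \<Rightarrow> (nat \<times> nat \<Rightarrow> real) \<Rightarrow> (real \<times> real) set" where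
  "Sset n i \<omega> = {(\<omega> (l, r), real l) | l r. 1 \<le> l \<and> l \<le> n \<and> 1 \<le> r \<and> r \<le> i l}"

definition eval :: "nat \<Rightarrow> (nat \<Rightarrow> nat) \<Rightarrow> real" where
  "eval n i = (\<integral>\<omega>. real (Lchain (Sset n i \<omega>)) \<partial>Umeasure)"

end

theory Submission
  imports Defs
begin

text \<open>Longest chains are subadditive under union of the point set, so raising the counts from
  \<open>i\<close> to \<open>m \<ge> i\<close> increases \<open>e\<close> by at most the expected longest chain among the
  \<open>d = \<Sum>\<^sub>l (m\<^sub>l - i\<^sub>l)\<close> new points. A chain of length \<open>L\<close> contains \<open>L - k + 1\<close> windows of
  \<open>k\<close> consecutive points; each is a \<open>k\<close>-set on distinct lines whose i.i.d. coordinates appear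
  in increasing order, which by exchangeability has probability at most \<open>1/k!\<close>. Hence the
  expectation is at most \<open>k - 1 + (d choose k)/k! \<le> k\<close> for \<open>k = \<lceil>3\<surd>d\<rceil>\<close>. Comparing both
  \<open>i\<close> and \<open>j\<close> with \<open>max i j\<close> gives the theorem.\<close>

subsection \<open>Chains of indices\<close>

text \<open>An index \<open>(l, r)\<close> stands for the \<open>r\<close>-th point on line \<open>l\<close>, with horizontal
  coordinate \<open>\<omega> (l, r)\<close>.\<close>

definition increasing_chain :: "('a::linorder \<times> 'b \<Rightarrow> real) \<Rightarrow> ('a \<times> 'b) list \<Rightarrow> bool" where
  "increasing_chain \<omega> ps \<longleftrightarrow> sorted_wrt (\<lambda>p q. fst p < fst q \<and> \<omega> p < \<omega> q) ps"

definition chain_length :: "('a::linorder \<times> 'b) set \<Rightarrow> ('a \<times> 'b \<Rightarrow> real) \<Rightarrow> nat" where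
  "chain_length A \<omega> = Max {length ps | ps. set ps \<subseteq> A \<and> increasing_chain \<omega> ps}"

lemma sorted_wrt_key_distinct:
  fixes g :: "'a \<Rightarrow> 'b::linorder"
  shows "sorted_wrt (\<lambda>p q. g p < g q) xs \<Longrightarrow> distinct xs"
  by (simp add: sorted_wrt_map[symmetric] strict_sorted_iff distinct_map)

lemma sorted_wrt_key_unique:
  fixes g :: "'a \<Rightarrow> 'b::linorder"
  assumes "sorted_wrt (\<lambda>p q. g p < g q) xs" "sorted_wrt (\<lambda>p q. g p < g q) ys" "set xs = set ys"
  shows "xs = ys"
proof -
  have "sorted (map g xs)" "distinct (map g xs)" "sorted (map g ys)" "distinct (map g ys)"
    using assms(1,2) by (simp_all add: sorted_wrt_map[symmetric] strict_sorted_iff)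
  then have "map g xs = map g ys"
    using assms(3) by (intro sorted_distinct_set_unique) auto
  moreover have "inj_on g (set xs \<union> set ys)"
    using \<open>distinct (map g xs)\<close> assms(3) by (simp add: distinct_map)
  ultimately show ?thesis using inj_on_map_eq_map by blast
qed

lemma increasing_chain_distinct: "increasing_chain \<omega> ps \<Longrightarrow> distinct ps"
  unfolding increasing_chain_def
  by (rule sorted_wrt_key_distinct[of fst]) (erule sorted_wrt_mono_rel[rotated], simp)

lemma chain_lengths_finite:
  assumes "finite A"
  shows "finite {length ps | ps. set ps \<subseteq> A \<and> increasing_chain \<omega> ps}"
  using finite_subset_distinct[OF assms]
  by (rule finite_subset[rotated, OF finite_imageI])
     (auto dest: increasing_chain_distinct)

lemma chain_length_ge:
  "finite A \<Longrightarrow> set ps \<subseteq> A \<Longrightarrow> increasing_chain \<omega> ps \<Longrightarrow> length ps \<le> chain_length A \<omega>"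
  unfolding chain_length_def by (rule Max_ge[OF chain_lengths_finite]) auto

lemma longest_chain_exists:
  assumes "finite A"
  obtains ps where "set ps \<subseteq> A" "increasing_chain \<omega> ps" "chain_length A \<omega> = length ps"
proof -
  have "chain_length A \<omega> \<in> {length ps | ps. set ps \<subseteq> A \<and> increasing_chain \<omega> ps}"
    unfolding chain_length_def
    by (rule Max_in[OF chain_lengths_finite[OF assms]])
       (auto intro!: exI[of _ "[]"] simp: increasing_chain_def)
  then show ?thesis using that by auto
qed

lemma chain_length_mono: "finite B \<Longrightarrow> A \<subseteq> B \<Longrightarrow> chain_length A \<omega> \<le> chain_length B \<omega>"
  by (metis chain_length_ge dual_order.trans finite_subset longest_chain_exists)

lemma chain_length_le_card: "finite A \<Longrightarrow> chain_length A \<omega> \<le> card A"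
  by (metis card_mono distinct_card increasing_chain_distinct longest_chain_exists)

lemma chain_length_union:
  assumes "finite A" "finite B"
  shows "chain_length (A \<union> B) \<omega> \<le> chain_length A \<omega> + chain_length B \<omega>"
proof -
  obtain ps where ps: "set ps \<subseteq> A \<union> B" "increasing_chain \<omega> ps" "chain_length (A \<union> B) \<omega> = length ps"
    using longest_chain_exists assms by (metis finite_Un)
  have "length (filter (\<lambda>p. p \<in> A) ps) \<le> chain_length A \<omega>"
    using ps by (intro chain_length_ge assms) (auto simp: increasing_chain_def sorted_wrt_filter)
  moreover have "length (filter (\<lambda>p. p \<notin> A) ps) \<le> chain_length B \<omega>"
    using ps by (intro chain_length_ge assms) (auto simp: increasing_chain_def sorted_wrt_filter)
  ultimately show ?thesis using ps(3) sum_length_filter_compl[of "\<lambda>p. p \<in> A" ps] by linarith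
qed

subsection \<open>A binomial estimate\<close>

lemma power_div_fact_le_exp:
  assumes "(x::real) \<ge> 0"
  shows "x ^ n / fact n \<le> exp x"
proof -
  have series: "(\<lambda>m. x ^ m / fact m) sums exp x"
    using exp_converges[of x] by (simp add: divide_inverse_commute scaleR_conv_of_real)
  have "(\<Sum>m\<in>{n}. x ^ m / fact m) \<le> (\<Sum>m. x ^ m / fact m)"
    by (rule sum_le_suminf) (use series assms in \<open>auto simp: sums_iff\<close>)
  then show ?thesis using series by (simp add: sums_iff)
qed

text \<open>From \<open>k\<^sup>k \<le> e\<^sup>k k!\<close> and \<open>e\<^sup>2 \<le> 9\<close>.\<close>
lemma power_le_fact_squared:
  assumes "9 * real d \<le> (real k)\<^sup>2"
  shows "real d ^ k \<le> (fact k)\<^sup>2"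
proof -
  have "exp (2::real) = exp 1 ^ 2" by (simp add: exp_of_nat_mult[symmetric])
  also have "\<dots> \<le> 3 ^ 2" by (rule power_mono[OF exp_le]) auto
  finally have "exp 2 * real d \<le> 9 * real d" by (intro mult_right_mono) auto
  with assms have e2: "exp 2 * real d \<le> (real k)\<^sup>2" by linarith
  have "exp (real k) ^ 2 * real d ^ k = (exp 2 * real d) ^ k"
    by (simp add: power_mult_distrib exp_of_nat_mult[symmetric] mult.commute)
  also have "\<dots> \<le> ((real k)\<^sup>2) ^ k" by (rule power_mono[OF e2]) simp
  also have "\<dots> = (real k ^ k)\<^sup>2" by (simp add: power_mult[symmetric] mult.commute)
  also have "\<dots> \<le> (exp (real k) * fact k)\<^sup>2"
    using power_div_fact_le_exp[of "real k" k] by (intro power_mono) (simp_all add: field_simps)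
  also have "\<dots> = exp (real k) ^ 2 * (fact k)\<^sup>2" by (simp add: power_mult_distrib)
  finally show ?thesis by simp
qed

lemma binomial_le_fact:
  assumes "9 * real d \<le> (real k)\<^sup>2"
  shows "real (d choose k) \<le> fact k"
proof -
  have "real (d choose k) * fact k \<le> real d ^ k"
    by (metis binomial_fact_pow of_nat_fact of_nat_le_iff of_nat_mult of_nat_power)
  also have "\<dots> \<le> fact k * fact k" using power_le_fact_squared[OF assms] by (simp add: power2_eq_square)
  finally show ?thesis by simp
qed

subsection \<open>Exchangeability of i.i.d. coordinates\<close>

abbreviation iid :: "real measure \<Rightarrow> ('i \<Rightarrow> real) measure" where
  "iid M \<equiv> PiM UNIV (\<lambda>_. M)"

definition ordered_along :: "'i list \<Rightarrow> ('i \<Rightarrow> real) set" where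
  "ordered_along ps = {\<omega>. sorted_wrt (\<lambda>p q. \<omega> p < \<omega> q) ps}"

context
  fixes M :: "real measure"
  assumes prob_space_M: "prob_space M" and sets_M: "sets M = sets borel"
begin

lemma prob_space_iid: "prob_space (iid M)"
  by (intro prob_space_PiM prob_space_M)

lemma space_iid [simp]: "space (iid M) = UNIV"
  using sets_eq_imp_space_eq[OF sets_M] by (simp add: space_PiM)

lemma measurable_coordinate [measurable]: "(\<lambda>\<omega>. \<omega> x) \<in> borel_measurable (iid M)"
proof -
  have "(\<lambda>\<omega>. \<omega> x) \<in> measurable (iid M) M"
    by (rule measurable_component_singleton) simp
  then show ?thesis by (simp add: measurable_cong_sets[OF refl sets_M])
qed

lemma pred_sorted_wrt_values [measurable]:
  "Measurable.pred (iid M) (\<lambda>\<omega>. sorted_wrt (\<lambda>p q. P p q \<and> \<omega> p < \<omega> q) ps)"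
  by (induction ps) simp_all

lemma ordered_along_sets: "ordered_along ps \<in> sets (iid M)"
  using pred_sorted_wrt_values[of "\<lambda>_ _. True" ps] by (simp add: ordered_along_def pred_def)

lemma measure_iid_reindex:
  assumes "inj f" "S \<in> sets (iid M)"
  shows "measure (iid M) {\<omega>. \<omega> \<circ> f \<in> S} = measure (iid M) S"
proof -
  let ?r = "\<lambda>\<omega>. \<lambda>n\<in>UNIV. \<omega> (f n)"
  have "distr (iid M) (iid M) ?r = iid M"
    using distr_PiM_reindex[of UNIV "\<lambda>_. M" f UNIV] assms(1) prob_space_M by simp
  moreover have "?r \<in> measurable (iid M) (iid M)" by measurable
  ultimately have "measure (iid M) S = measure (iid M) (?r -` S \<inter> space (iid M))"
    by (metis measure_distr assms(2))
  also have "?r -` S \<inter> space (iid M) = {\<omega>. \<omega> \<circ> f \<in> S}"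
    by (auto simp: restrict_def comp_def)
  finally show ?thesis by simp
qed

text \<open>The events \<open>ordered_along (map \<sigma> ps)\<close>, for the permutations \<sigma> of the
  entries of ps, are disjoint and, by exchangeability, equally likely.\<close>
lemma measure_ordered_along_le:
  assumes "distinct ps"
  shows "measure (iid M) (ordered_along ps) \<le> 1 / fact (length ps)"
proof -
  interpret prob_space "iid M" by (rule prob_space_iid)
  define P where "P = {\<sigma>. \<sigma> permutes set ps}"
  have card_P: "card P = fact (length ps)"
    using assms by (simp add: P_def card_permutations distinct_card)
  have same: "measure (iid M) (ordered_along (map \<sigma> ps)) = measure (iid M) (ordered_along ps)"
    if "\<sigma> \<in> P" for \<sigma>
  proof -
    have "inj \<sigma>" using that by (simp add: P_def permutes_inj)
    moreover have "ordered_along (map \<sigma> ps) = {\<omega>. \<omega> \<circ> \<sigma> \<in> ordered_along ps}"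
      by (simp add: ordered_along_def sorted_wrt_map)
    ultimately show ?thesis by (simp add: measure_iid_reindex ordered_along_sets)
  qed
  have disj: "disjoint_family_on (\<lambda>\<sigma>. ordered_along (map \<sigma> ps)) P"
  unfolding disjoint_family_on_def
  proof (intro ballI impI)
    fix \<sigma> \<tau> assume st: "\<sigma> \<in> P" "\<tau> \<in> P" "\<sigma> \<noteq> \<tau>"
    show "ordered_along (map \<sigma> ps) \<inter> ordered_along (map \<tau> ps) = {}"
    proof (rule ccontr)
      assume "ordered_along (map \<sigma> ps) \<inter> ordered_along (map \<tau> ps) \<noteq> {}"
      then obtain \<omega> where "\<omega> \<in> ordered_along (map \<sigma> ps)" "\<omega> \<in> ordered_along (map \<tau> ps)"
        by blast
      moreover have "set (map \<sigma> ps) = set (map \<tau> ps)"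
        using st(1,2) by (simp add: P_def permutes_image)
      ultimately have "map \<sigma> ps = map \<tau> ps"
        unfolding ordered_along_def mem_Collect_eq by (rule sorted_wrt_key_unique)
      then have "\<sigma> x = \<tau> x" for x
        using st(1,2) unfolding P_def by (cases "x \<in> set ps") (auto simp: permutes_not_in)
      then have "\<sigma> = \<tau>" ..
      with st(3) show False ..
    qed
  qed
  have "fact (length ps) * measure (iid M) (ordered_along ps)
      = measure (iid M) (\<Union>\<sigma>\<in>P. ordered_along (map \<sigma> ps))"
    using same card_P
    by (subst measure_finite_Union[OF _ _ disj])
       (auto simp: P_def finite_permutations ordered_along_sets)
  also have "\<dots> \<le> 1" by (rule prob_le_1)
  finally show ?thesis by (simp add: field_simps)
qed

subsection \<open>Expected longest chain among i.i.d. values\<close>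

lemma real_chain_length_eq_Max:
  assumes "finite A"
  shows "real (chain_length A \<omega>) =
    (MAX ps\<in>{ps. set ps \<subseteq> A \<and> distinct ps}. if increasing_chain \<omega> ps then real (length ps) else 0)"
proof (rule Max_eqI[symmetric])
  show "finite ((\<lambda>ps. if increasing_chain \<omega> ps then real (length ps) else 0) ` {ps. set ps \<subseteq> A \<and> distinct ps})"
    using finite_subset_distinct[OF assms] by simp
  obtain ps where "set ps \<subseteq> A" "increasing_chain \<omega> ps" "chain_length A \<omega> = length ps"
    using longest_chain_exists[OF assms] .
  then show "real (chain_length A \<omega>) \<in> (\<lambda>ps. if increasing_chain \<omega> ps then real (length ps) else 0) ` {ps. set ps \<subseteq> A \<and> distinct ps}"
    by (auto intro!: image_eqI[of _ _ ps] increasing_chain_distinct)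
qed (use chain_length_ge[OF assms] in auto)

lemma borel_measurable_chain_length [measurable]:
  "finite A \<Longrightarrow> (\<lambda>\<omega>. real (chain_length A \<omega>)) \<in> borel_measurable (iid M)"
  unfolding real_chain_length_eq_Max
  by (intro borel_measurable_Max finite_subset_distinct) (simp_all add: increasing_chain_def)

lemma integrable_chain_length:
  assumes "finite A"
  shows "integrable (iid M) (\<lambda>\<omega>. real (chain_length A \<omega>))"
proof -
  interpret prob_space "iid M" by (rule prob_space_iid)
  show ?thesis
    by (rule integrable_const_bound[where B = "real (card A)"])
       (use assms chain_length_le_card in auto)
qed

definition line_sorted_lists :: "('a::linorder \<times> 'b) set \<Rightarrow> nat \<Rightarrow> ('a \<times> 'b) list set" where
  "line_sorted_lists B k = {ps. set ps \<subseteq> B \<and> length ps = k \<and> sorted_wrt (\<lambda>p q. fst p < fst q) ps}"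

lemma finite_line_sorted_lists: "finite B \<Longrightarrow> finite (line_sorted_lists B k)"
  by (rule finite_subset[OF _ finite_lists_length_eq[of B k]]) (auto simp: line_sorted_lists_def)

lemma card_line_sorted_lists:
  assumes "finite B"
  shows "card (line_sorted_lists B k) \<le> card B choose k"
proof -
  have "inj_on set (line_sorted_lists B k)"
    by (rule inj_onI) (auto simp: line_sorted_lists_def intro: sorted_wrt_key_unique)
  moreover have "set ` line_sorted_lists B k \<subseteq> {C. C \<subseteq> B \<and> card C = k}"
    by (auto simp: line_sorted_lists_def distinct_card dest: sorted_wrt_key_distinct)
  ultimately have "card (line_sorted_lists B k) \<le> card {C. C \<subseteq> B \<and> card C = k}"
    by (intro card_inj_on_le) (auto simp: assms)
  then show ?thesis using n_subsets[OF assms] by simp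
qed

lemma increasing_chain_iff:
  "increasing_chain \<omega> ps \<longleftrightarrow> sorted_wrt (\<lambda>p q. fst p < fst q) ps \<and> \<omega> \<in> ordered_along ps"
  unfolding increasing_chain_def ordered_along_def by (induction ps) auto

text \<open>The \<open>L - k + 1\<close> windows of length \<open>k\<close> of a longest chain of length \<open>L\<close> are distinct
  line-sorted lists along which \<open>\<omega>\<close> increases.\<close>
lemma chain_length_le_count_ordered:
  assumes B: "finite B" and k: "k \<ge> 1"
  shows "chain_length B \<omega> \<le> (k - 1) + card {ps \<in> line_sorted_lists B k. \<omega> \<in> ordered_along ps}"
proof -
  obtain ps where ps: "set ps \<subseteq> B" "increasing_chain \<omega> ps" "chain_length B \<omega> = length ps"
    using longest_chain_exists[OF B] .
  show ?thesis
  proof (cases "length ps < k")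
    case True then show ?thesis using ps(3) by simp
  next
    case False
    define window where "window m = take k (drop m ps)" for m
    have windows: "window ` {0..length ps - k} \<subseteq> {ps \<in> line_sorted_lists B k. \<omega> \<in> ordered_along ps}"
      using ps(1,2) False
      by (auto simp: window_def line_sorted_lists_def increasing_chain_iff ordered_along_def
          sorted_wrt_take sorted_wrt_drop dest: in_set_takeD in_set_dropD)
    have "inj_on window {0..length ps - k}"
    proof (rule inj_onI)
      fix a b assume ab: "a \<in> {0..length ps - k}" "b \<in> {0..length ps - k}" "window a = window b"
      have hd_window: "hd (window m) = ps ! m" if "m \<le> length ps - k" for m
        using that k False by (simp add: window_def hd_take hd_drop_conv_nth)
      have "ps ! a = ps ! b" using ab hd_window[of a] hd_window[of b] by simp
      moreover have "a < length ps" "b < length ps" using ab k False by auto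
      ultimately show "a = b"
        using increasing_chain_distinct[OF ps(2)] by (simp add: nth_eq_iff_index_eq)
    qed
    then have "length ps - k + 1 = card (window ` {0..length ps - k})"
      by (simp add: card_image)
    also have "\<dots> \<le> card {ps \<in> line_sorted_lists B k. \<omega> \<in> ordered_along ps}"
      by (rule card_mono[OF _ windows]) (simp add: finite_line_sorted_lists[OF B])
    finally show ?thesis using ps(3) False by linarith
  qed
qed

lemma expected_chain_length_le_binomial:
  assumes B: "finite B" and k: "k \<ge> 1"
  shows "(\<integral>\<omega>. real (chain_length B \<omega>) \<partial>iid M) \<le> real (k - 1) + real (card B choose k) / fact k"
proof -
  interpret prob_space "iid M" by (rule prob_space_iid)
  let ?L = "line_sorted_lists B k"
  have finite_L: "finite ?L" by (rule finite_line_sorted_lists[OF B])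
  have integrable_indicators: "integrable (iid M) (\<lambda>\<omega>. \<Sum>ps\<in>?L. indicator (ordered_along ps) \<omega> :: real)"
    by (intro Bochner_Integration.integrable_sum integrable_real_indicator ordered_along_sets)
       (simp add: less_top[symmetric])
  have "real (chain_length B \<omega>) \<le> real (k - 1) + (\<Sum>ps\<in>?L. indicator (ordered_along ps) \<omega>)" for \<omega>
  proof -
    have "(\<Sum>ps\<in>?L. indicator (ordered_along ps) \<omega> :: real) = real (card {ps \<in> ?L. \<omega> \<in> ordered_along ps})"
      using finite_L by (simp add: indicator_def sum.If_cases Int_def)
    then show ?thesis
      using chain_length_le_count_ordered[OF B k, of \<omega>] by linarith
  qed
  then have "(\<integral>\<omega>. real (chain_length B \<omega>) \<partial>iid M)
      \<le> (\<integral>\<omega>. real (k - 1) + (\<Sum>ps\<in>?L. indicator (ordered_along ps) \<omega>) \<partial>iid M)"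
    by (intro integral_mono integrable_chain_length B Bochner_Integration.integrable_add
        integrable_indicators) simp_all
  also have "\<dots> = real (k - 1) + (\<Sum>ps\<in>?L. measure (iid M) (ordered_along ps))"
    using integrable_indicators prob_space
    by (auto simp: Bochner_Integration.integral_sum ordered_along_sets less_top[symmetric])
  also have "\<dots> \<le> real (k - 1) + (\<Sum>ps\<in>?L. 1 / fact k)"
    using measure_ordered_along_le
    by (intro add_left_mono sum_mono)
       (auto simp: line_sorted_lists_def dest: sorted_wrt_key_distinct)
  also have "\<dots> \<le> real (k - 1) + real (card B choose k) / fact k"
    using card_line_sorted_lists[OF B, of k] by (simp add: divide_right_mono)
  finally show ?thesis .
qed

lemma expected_chain_length_le:
  assumes B: "finite B"
  shows "(\<integral>\<omega>. real (chain_length B \<omega>) \<partial>iid M) \<le> 6 * sqrt (real (card B))"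
proof (cases "card B = 0")
  case True
  then show ?thesis using chain_length_le_card[OF B] by simp
next
  case False
  define d where "d = card B"
  define k where "k = nat \<lceil>3 * sqrt (real d)\<rceil>"
  have sqrt_d: "sqrt (real d) \<ge> 1" using False by (simp add: d_def)
  have k_ge: "3 * sqrt (real d) \<le> real k" and k_le: "real k \<le> 3 * sqrt (real d) + 1"
    unfolding k_def using sqrt_d by linarith+
  have "k \<ge> 1" using k_ge sqrt_d by linarith
  have "(3 * sqrt (real d))\<^sup>2 \<le> (real k)\<^sup>2" by (rule power_mono[OF k_ge]) simp
  then have "9 * real d \<le> (real k)\<^sup>2" by (simp add: power_mult_distrib)
  then have "real (d choose k) / fact k \<le> 1" using binomial_le_fact by simp
  moreover have "real (k - 1) = real k - 1" using \<open>k \<ge> 1\<close> by simp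
  ultimately have "(\<integral>\<omega>. real (chain_length B \<omega>) \<partial>iid M) \<le> real k"
    using expected_chain_length_le_binomial[OF B \<open>k \<ge> 1\<close>] unfolding d_def by linarith
  also have "\<dots> \<le> 6 * sqrt (real d)" using k_le sqrt_d by linarith
  finally show ?thesis by (simp add: d_def)
qed

end

lemma Lchain_image_eq_chain_length:
  fixes A :: "(nat \<times> 'b) set"
  assumes "finite A"
  shows "Lchain ((\<lambda>p. (\<omega> p, real (fst p))) ` A) = chain_length A \<omega>"
proof -
  define pt where "pt p = (\<omega> p, real (fst p))" for p :: "nat \<times> 'b"
  have "{length xs | xs. set xs \<subseteq> pt ` A \<and> sorted_wrt prec xs}
      = {length ps | ps. set ps \<subseteq> A \<and> increasing_chain \<omega> ps}"
  proof (intro equalityI subsetI)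
    fix L assume "L \<in> {length xs | xs. set xs \<subseteq> pt ` A \<and> sorted_wrt prec xs}"
    then obtain xs where xs: "L = length xs" "set xs \<subseteq> pt ` A" "sorted_wrt prec xs" by blast
    define g where "g = inv_into A pt"
    have g: "g x \<in> A" "pt (g x) = x" if "x \<in> set xs" for x
      using that xs(2) by (auto simp: g_def inv_into_into f_inv_into_f)
    have "increasing_chain \<omega> (map g xs)"
      unfolding increasing_chain_def sorted_wrt_map
    proof (rule sorted_wrt_mono_rel[OF _ xs(3)])
      fix x y assume "x \<in> set xs" "y \<in> set xs" "prec x y"
      then show "fst (g x) < fst (g y) \<and> \<omega> (g x) < \<omega> (g y)"
        using g(2)[of x] g(2)[of y] unfolding prec_def pt_def by (metis fst_conv snd_conv of_nat_less_iff)
    qed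
    moreover have "set (map g xs) \<subseteq> A" using g(1) by auto
    ultimately show "L \<in> {length ps | ps. set ps \<subseteq> A \<and> increasing_chain \<omega> ps}"
      using xs(1) by (metis (mono_tags, lifting) length_map mem_Collect_eq)
  next
    fix L assume "L \<in> {length ps | ps. set ps \<subseteq> A \<and> increasing_chain \<omega> ps}"
    then obtain ps where ps: "L = length ps" "set ps \<subseteq> A" "increasing_chain \<omega> ps" by blast
    have "sorted_wrt prec (map pt ps)"
      using ps(3) unfolding increasing_chain_def sorted_wrt_map
      by (rule sorted_wrt_mono_rel[rotated]) (auto simp: prec_def pt_def)
    moreover have "set (map pt ps) \<subseteq> pt ` A" using ps(2) by auto
    ultimately show "L \<in> {length xs | xs. set xs \<subseteq> pt ` A \<and> sorted_wrt prec xs}"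
      using ps(1) by (metis (mono_tags, lifting) length_map mem_Collect_eq)
  qed
  then show ?thesis by (simp add: Lchain_def chain_length_def pt_def)
qed

definition line_indices :: "nat \<Rightarrow> (nat \<Rightarrow> nat) \<Rightarrow> (nat \<times> nat) set" where
  "line_indices n i = (SIGMA l:{1..n}. {1..i l})"

lemma finite_line_indices [simp]: "finite (line_indices n i)"
  by (simp add: line_indices_def)

lemma card_line_indices: "card (line_indices n i) = (\<Sum>l = 1..n. i l)"
  by (simp add: line_indices_def)

lemma line_indices_mono: "(\<And>l. i l \<le> m l) \<Longrightarrow> line_indices n i \<subseteq> line_indices n m"
  by (auto simp: line_indices_def) (meson order_trans)

lemma eval_eq_expected_chain_length:
  "eval n i = (\<integral>\<omega>. real (chain_length (line_indices n i) \<omega>) \<partial>Umeasure)"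
proof -
  have "Sset n i \<omega> = (\<lambda>p. (\<omega> p, real (fst p))) ` line_indices n i" for \<omega>
    by (auto simp: Sset_def line_indices_def)
  then show ?thesis by (simp add: eval_def Lchain_image_eq_chain_length)
qed

lemma prob_space_uniform_01: "prob_space (uniform_measure lborel {0..1::real})"
  by (intro prob_space_uniform_measure) auto

lemma sets_uniform_01: "sets (uniform_measure lborel {0..1::real}) = sets borel"
  by simp

lemma eval_mono:
  assumes "\<And>l. i l \<le> m l"
  shows "eval n i \<le> eval n m"
  unfolding eval_eq_expected_chain_length Umeasure_def
  using chain_length_mono[OF _ line_indices_mono[OF assms]]
  by (intro integral_mono integrable_chain_length[OF prob_space_uniform_01 sets_uniform_01]) auto

lemma eval_le_add_sqrt:
  assumes le: "\<And>l. i l \<le> m l"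
  shows "eval n m \<le> eval n i + 6 * sqrt (\<Sum>l = 1..n. real (m l) - real (i l))"
proof -
  note integrable = integrable_chain_length[OF prob_space_uniform_01 sets_uniform_01]
  have sub: "line_indices n i \<subseteq> line_indices n m" by (rule line_indices_mono[OF le])
  define D where "D = line_indices n m - line_indices n i"
  have D: "finite D" "line_indices n m = line_indices n i \<union> D"
    using sub by (auto simp: D_def)
  have "real (chain_length (line_indices n m) \<omega>)
      \<le> real (chain_length (line_indices n i) \<omega>) + real (chain_length D \<omega>)" for \<omega>
    using chain_length_union[OF finite_line_indices D(1)] D(2) by (metis of_nat_add of_nat_mono)
  then have "eval n m \<le> (\<integral>\<omega>. real (chain_length (line_indices n i) \<omega>) + real (chain_length D \<omega>) \<partial>Umeasure)"
    unfolding eval_eq_expected_chain_length Umeasure_def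
    by (intro integral_mono Bochner_Integration.integrable_add integrable D(1) finite_line_indices)
  also have "\<dots> = eval n i + (\<integral>\<omega>. real (chain_length D \<omega>) \<partial>Umeasure)"
    unfolding eval_eq_expected_chain_length Umeasure_def
    by (intro Bochner_Integration.integral_add integrable D(1) finite_line_indices)
  also have "(\<integral>\<omega>. real (chain_length D \<omega>) \<partial>Umeasure) \<le> 6 * sqrt (real (card D))"
    unfolding Umeasure_def by (rule expected_chain_length_le[OF prob_space_uniform_01 sets_uniform_01 D(1)])
  also have "real (card D) = (\<Sum>l = 1..n. real (m l) - real (i l))"
    using sub card_mono[OF _ sub]
    by (simp add: D_def card_Diff_subset of_nat_diff card_line_indices sum_subtractf)
  finally show ?thesis by simp
qed

theorem mainTheorem9:
  fixes n :: nat and i j :: "nat \<Rightarrow> nat"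
  shows "\<bar>eval n i - eval n j\<bar>
           \<le> 6 * sqrt (\<Sum>l = 1..n. \<bar>real (i l) - real (j l)\<bar>)"
proof -
  define m where "m l = max (i l) (j l)" for l
  define S where "S = (\<Sum>l = 1..n. \<bar>real (i l) - real (j l)\<bar>)"
  have im: "i l \<le> m l" and jm: "j l \<le> m l" for l by (simp_all add: m_def)
  have "sqrt (\<Sum>l = 1..n. real (m l) - real (i l)) \<le> sqrt S"
    and "sqrt (\<Sum>l = 1..n. real (m l) - real (j l)) \<le> sqrt S"
    unfolding S_def by (intro real_sqrt_le_mono sum_mono; simp add: m_def)+
  then show ?thesis
    using eval_mono[of i m n, OF im] eval_mono[of j m n, OF jm]
      eval_le_add_sqrt[of i m n, OF im] eval_le_add_sqrt[of j m n, OF jm]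
    unfolding S_def by linarith
qed

end
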